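(* For every graph $G=(V,E)$, the star inequalities $$x(W)+(|W|-1)x_w\le |W|\qquad\text{for all } w\in V \text{ and } W\subseteq N(w)$$ are valid for $\mathcal{P}(G)$. Moreover, if $G$ is a tree, each of these inequalities defines a facet of $\mathcal{P}(G)$.
   Context: All graphs are simple and connected; a tree is a connected graph with no cycle. $N(w)$ is the neighborhood of $w$, $x(A)=\sum_{a\in A}x_a$. A co-2-plex is a vertex set inducing a subgraph of maximum degree at most 1. $\mathcal{P}(G)=\mathrm{conv}\{\chi^S : S\text{ co-2-plex of } G\}\subseteq\mathbb{R}^V$. *)

theory Defs
  imports "HOL-Analysis.Analysis"
begin

definition simple_graph :: "('n \<Rightarrow> 'n \<Rightarrow> bool) \<Rightarrow> bool" where
  "simple_graph E \<longleftrightarrow> (\<forall>u v. E u v \<longrightarrow> E v u) \<and> (\<forall>v. \<not> E v v)"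

definition connected_graph :: "('n \<Rightarrow> 'n \<Rightarrow> bool) \<Rightarrow> bool" where
  "connected_graph E \<longleftrightarrow> (\<forall>u v. E\<^sup>*\<^sup>* u v)"

definition is_cycle :: "('n \<Rightarrow> 'n \<Rightarrow> bool) \<Rightarrow> 'n list \<Rightarrow> bool" where
  "is_cycle E cs \<longleftrightarrow> length cs \<ge> 3 \<and> distinct cs
     \<and> (\<forall>i. Suc i < length cs \<longrightarrow> E (cs ! i) (cs ! Suc i))
     \<and> E (last cs) (hd cs)"

definition is_tree :: "('n \<Rightarrow> 'n \<Rightarrow> bool) \<Rightarrow> bool" where
  "is_tree E \<longleftrightarrow> simple_graph E \<and> connected_graph E \<and> (\<nexists>cs. is_cycle E cs)"

definition neighbors :: "('n \<Rightarrow> 'n \<Rightarrow> bool) \<Rightarrow> 'n \<Rightarrow> 'n set" where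
  "neighbors E w = {v. E w v}"

definition co_2_plex :: "('n::finite \<Rightarrow> 'n \<Rightarrow> bool) \<Rightarrow> 'n set \<Rightarrow> bool" where
  "co_2_plex E S \<longleftrightarrow> (\<forall>v\<in>S. card (neighbors E v \<inter> S) \<le> 1)"

definition char_vec :: "'n::finite set \<Rightarrow> real ^ 'n" where
  "char_vec S = (\<chi> i. if i \<in> S then 1 else 0)"

definition co2plex_polytope :: "('n::finite \<Rightarrow> 'n \<Rightarrow> bool) \<Rightarrow> (real ^ 'n) set" where
  "co2plex_polytope E = convex hull {char_vec S | S. co_2_plex E S}"

definition star_lhs :: "'n::finite \<Rightarrow> 'n set \<Rightarrow> real ^ 'n \<Rightarrow> real" where
  "star_lhs w W x = (\<Sum>a\<in>W. x $ a) + (real (card W) - 1) * x $ w"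

end

theory Submission
  imports Defs
begin

text \<open>A co-2-plex containing w meets N(w) in at most one vertex, so the star inequality holds at
  every vertex of the polytope. In a tree, W \<subseteq> N(w) is independent and w is the only common
  neighbour of two vertices of W. Hence char_vec W, char_vec (insert u W) for u \<notin> insert w W, and
  char_vec {w, a} for a \<in> W are co-2-plexes on the star hyperplane, and their differences from
  char_vec W span its direction. As the polytope contains 0 and all unit vectors, it is
  full-dimensional, so the face cut out by the hyperplane is a facet.\<close>

definition star_normal :: "'n::finite \<Rightarrow> 'n set \<Rightarrow> real ^ 'n" where
  "star_normal w W = char_vec W + (real (card W) - 1) *\<^sub>R axis w 1"

lemma star_normal_component:
  "star_normal w W $ i = (if i \<in> W then 1 else 0) + (if i = w then real (card W) - 1 else 0)"
  by (simp add: star_normal_def char_vec_def axis_def)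

lemma inner_char_vec: "char_vec S \<bullet> x = (\<Sum>i\<in>S. x $ i)"
  unfolding inner_vec_def char_vec_def
  by (simp add: if_distrib[of "\<lambda>a. a * _"] sum.If_cases Int_commute)

lemma star_lhs_eq_inner: "star_lhs w W x = star_normal w W \<bullet> x"
  by (simp add: star_lhs_def star_normal_def inner_add_left inner_char_vec inner_axis')

lemma star_lhs_char_vec:
  "star_lhs w W (char_vec S) = real (card (W \<inter> S)) + (if w \<in> S then real (card W) - 1 else 0)"
  by (simp add: star_lhs_def char_vec_def sum.If_cases Int_commute)

lemma star_normal_nonzero:
  assumes "w \<notin> W"
  shows "star_normal w W \<noteq> 0"
proof (cases "W = {}")
  case True
  then have "star_normal w W $ w = -1" by (simp add: star_normal_component)
  then show ?thesis by auto
next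
  case False
  then obtain a where "a \<in> W" by auto
  with assms have "star_normal w W $ a = 1" by (auto simp: star_normal_component)
  then show ?thesis by auto
qed

lemma co_2_plex_card_le_2:
  assumes "simple_graph E" "card S \<le> 2"
  shows "co_2_plex E S"
  unfolding co_2_plex_def
proof
  fix v assume "v \<in> S"
  have "neighbors E v \<inter> S \<subseteq> S - {v}"
    using assms(1) by (auto simp: neighbors_def simple_graph_def)
  then have "card (neighbors E v \<inter> S) \<le> card (S - {v})" by (intro card_mono) auto
  also have "\<dots> = card S - 1" using \<open>v \<in> S\<close> by simp
  finally show "card (neighbors E v \<inter> S) \<le> 1" using assms(2) by linarith
qed

lemma char_vec_in_co2plex_polytope: "co_2_plex E S \<Longrightarrow> char_vec S \<in> co2plex_polytope E"
  unfolding co2plex_polytope_def by (rule hull_inc) blast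

lemma star_inequality_char_vec:
  assumes "W \<subseteq> neighbors E w" "co_2_plex E S"
  shows "star_lhs w W (char_vec S) \<le> real (card W)"
proof (cases "w \<in> S")
  case True
  have "card (W \<inter> S) \<le> card (neighbors E w \<inter> S)"
    using assms(1) by (intro card_mono) auto
  also have "\<dots> \<le> 1" using assms(2) True by (auto simp: co_2_plex_def)
  finally show ?thesis using True by (simp add: star_lhs_char_vec)
next
  case False
  have "card (W \<inter> S) \<le> card W" by (intro card_mono) auto
  then show ?thesis using False by (simp add: star_lhs_char_vec)
qed

lemma star_inequality_valid:
  assumes "W \<subseteq> neighbors E w" "x \<in> co2plex_polytope E"
  shows "star_lhs w W x \<le> real (card W)"
proof -
  have "co2plex_polytope E \<subseteq> {x. star_normal w W \<bullet> x \<le> real (card W)}"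
    unfolding co2plex_polytope_def
  proof (rule hull_minimal)
    show "{char_vec S |S. co_2_plex E S} \<subseteq> {x. star_normal w W \<bullet> x \<le> real (card W)}"
      using star_inequality_char_vec[OF assms(1)] by (auto simp: star_lhs_eq_inner)
  qed (rule convex_halfspace_le)
  then show ?thesis using assms(2) by (auto simp: star_lhs_eq_inner)
qed

lemma aff_dim_co2plex_polytope:
  fixes E :: "'n::finite \<Rightarrow> 'n \<Rightarrow> bool"
  assumes "simple_graph E"
  shows "aff_dim (co2plex_polytope E) = DIM(real ^ 'n)"
proof -
  have "0 \<in> co2plex_polytope E"
  proof -
    have "char_vec {} \<in> co2plex_polytope E"
      by (rule char_vec_in_co2plex_polytope) (simp add: co_2_plex_def)
    moreover have "char_vec {} = (0 :: real ^ 'n)"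
      by (simp add: char_vec_def vec_eq_iff)
    ultimately show ?thesis by simp
  qed
  moreover have "axis i (1::real) \<in> co2plex_polytope E" for i
  proof -
    have "char_vec {i} \<in> co2plex_polytope E"
      by (intro char_vec_in_co2plex_polytope co_2_plex_card_le_2 assms) simp
    moreover have "char_vec {i} = axis i (1::real)"
      by (simp add: char_vec_def axis_def vec_eq_iff)
    ultimately show ?thesis by simp
  qed
  ultimately have "insert 0 Basis \<subseteq> co2plex_polytope E"
    by (auto simp: Basis_vec_def)
  moreover have "affine hull (insert 0 Basis) = (UNIV :: (real ^ 'n) set)"
    by (simp add: affine_hull_span_0 hull_inc span_Basis)
  ultimately have "affine hull co2plex_polytope E = UNIV"
    by (metis hull_mono top.extremum_uniqueI)
  then show ?thesis by (simp only: aff_dim_eq_full)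
qed

lemma facet_of_supporting_hyperplane:
  fixes P :: "'a::euclidean_space set"
  assumes "convex P" "aff_dim P = DIM('a)" "c \<noteq> 0"
    and valid: "\<And>x. x \<in> P \<Longrightarrow> c \<bullet> x \<le> b"
    and p: "p \<in> P" "c \<bullet> p = b"
    and spans: "{y. c \<bullet> y = 0} \<subseteq> span ((\<lambda>x. x - p) ` (P \<inter> {x. c \<bullet> x = b}))"
  shows "P \<inter> {x. c \<bullet> x = b} facet_of P"
proof -
  let ?F = "P \<inter> {x. c \<bullet> x = b}"
  have "aff_dim ?F \<le> aff_dim {x. c \<bullet> x = b}" by (rule aff_dim_subset) auto
  then have upper: "aff_dim ?F \<le> int DIM('a) - 1" using \<open>c \<noteq> 0\<close> by simp
  have "DIM('a) - 1 = dim {y. c \<bullet> y = 0}" using dim_hyperplane[OF \<open>c \<noteq> 0\<close>] by simp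
  also have "\<dots> \<le> dim (span ((\<lambda>x. x - p) ` ?F))" by (rule dim_subset[OF spans])
  also have "\<dots> = aff_dim ?F"
    using aff_dim_eq_dim_subtract[of p ?F] p by (simp add: hull_inc)
  finally have "int DIM('a) - 1 \<le> aff_dim ?F" by linarith
  with upper have "aff_dim ?F = aff_dim P - 1" using assms(2) by linarith
  moreover have "?F face_of P" by (rule face_of_Int_supporting_hyperplane_le[OF \<open>convex P\<close> valid])
  moreover have "?F \<noteq> {}" using p by auto
  ultimately show ?thesis by (simp add: facet_of_def)
qed

lemma tree_neighbors_nonadjacent:
  assumes "is_tree E" "E w a" "E w b"
  shows "\<not> E a b"
proof
  assume "E a b"
  have "E b w" and "\<And>v. \<not> E v v"
    using assms by (auto simp: is_tree_def simple_graph_def)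
  with assms \<open>E a b\<close> have "is_cycle E [w, a, b]"
    by (auto simp: is_cycle_def less_Suc_eq nth_Cons')
  with assms(1) show False by (auto simp: is_tree_def)
qed

lemma tree_common_neighbor_unique:
  assumes "is_tree E" "E w a" "E w b" "a \<noteq> b" "E u a" "E u b"
  shows "u = w"
proof (rule ccontr)
  assume "u \<noteq> w"
  have "E a w" "E b u" and "\<And>v. \<not> E v v"
    using assms by (auto simp: is_tree_def simple_graph_def)
  with assms \<open>u \<noteq> w\<close> have "is_cycle E [u, a, w, b]"
    by (auto simp: is_cycle_def less_Suc_eq nth_Cons')
  with assms(1) show False by (auto simp: is_tree_def)
qed

lemma tree_star_leaves_independent:
  assumes "is_tree E" "W \<subseteq> neighbors E w" "v \<in> W"
  shows "neighbors E v \<inter> W = {}"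
proof -
  have "\<not> E v b" if "b \<in> W" for b
    using tree_neighbors_nonadjacent[OF assms(1)] assms(2,3) that by (auto simp: neighbors_def)
  then show ?thesis by (auto simp: neighbors_def)
qed

lemma tree_star_leaves_co_2_plex:
  assumes "is_tree E" "W \<subseteq> neighbors E w"
  shows "co_2_plex E W"
  using tree_star_leaves_independent[OF assms] by (simp add: co_2_plex_def)

lemma tree_star_leaves_insert_co_2_plex:
  assumes "is_tree E" "W \<subseteq> neighbors E w" "u \<noteq> w"
  shows "co_2_plex E (insert u W)"
  unfolding co_2_plex_def
proof
  fix v assume v: "v \<in> insert u W"
  have irrefl: "\<not> E u u" using assms(1) by (simp add: is_tree_def simple_graph_def)
  show "card (neighbors E v \<inter> insert u W) \<le> 1"
  proof (cases "v = u")
    case True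
    have "a = b" if "a \<in> neighbors E u \<inter> insert u W" "b \<in> neighbors E u \<inter> insert u W" for a b
    proof (rule ccontr)
      assume "a \<noteq> b"
      from that irrefl have "a \<in> W" "b \<in> W" "E u a" "E u b" by (auto simp: neighbors_def)
      with assms(2) have "E w a" "E w b" by (auto simp: neighbors_def)
      from tree_common_neighbor_unique[OF assms(1) this \<open>a \<noteq> b\<close> \<open>E u a\<close> \<open>E u b\<close>] assms(3)
      show False by simp
    qed
    with True show ?thesis by (simp add: card_le_Suc0_iff_eq)
  next
    case False
    with v have "v \<in> W" by simp
    with assms(1,2) have "neighbors E v \<inter> W = {}" by (rule tree_star_leaves_independent)
    then have "neighbors E v \<inter> insert u W \<subseteq> {u}" by auto
    then have "card (neighbors E v \<inter> insert u W) \<le> card {u}" by (intro card_mono) auto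
    then show ?thesis by simp
  qed
qed

lemma star_hyperplane_decomposition:
  assumes "w \<notin> W" "star_normal w W \<bullet> y = 0"
  shows "y = (\<Sum>u\<in>- insert w W. y $ u *\<^sub>R axis u 1)
           + (\<Sum>a\<in>W. (y $ a + y $ w) *\<^sub>R (char_vec {w, a} - char_vec W))"
    (is "y = ?off + ?on")
proof -
  have "(\<Sum>a\<in>W. y $ a) + (real (card W) - 1) * y $ w = 0"
    using assms(2) by (simp add: star_lhs_eq_inner[symmetric] star_lhs_def)
  then have sum_on: "(\<Sum>a\<in>W. y $ a + y $ w) = y $ w"
    by (simp add: sum.distrib algebra_simps)
  have off: "?off $ i = (if i \<notin> insert w W then y $ i else 0)" for i
    by (simp add: axis_def if_distrib sum.delta cong: if_cong)
  have on: "?on $ i = (\<Sum>a\<in>W. (y $ a + y $ w) *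
      ((if i = w then 1 else 0) + (if i = a then 1 else 0) - (if i \<in> W then 1 else 0)))" for i
    using assms(1) by (auto simp: char_vec_def intro!: sum.cong)
  have "y $ i = ?off $ i + ?on $ i" for i
  proof -
    consider "i \<notin> insert w W" | "i = w" | "i \<in> W" by auto
    then show ?thesis
    proof cases
      case 1
      have "?on $ i = 0" unfolding on using 1 by (auto intro!: sum.neutral)
      with 1 show ?thesis unfolding off by simp
    next
      case 2
      have "?on $ i = (\<Sum>a\<in>W. y $ a + y $ w)"
        unfolding on using 2 assms(1) by (auto intro!: sum.cong)
      with 2 sum_on show ?thesis unfolding off by simp
    next
      case 3
      have "?on $ i = (\<Sum>a\<in>W. (if a = i then y $ a + y $ w else 0) - (y $ a + y $ w))"
        unfolding on using 3 assms(1) by (auto intro!: sum.cong)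
      also have "\<dots> = y $ i" using 3 by (simp add: sum_subtractf sum_on)
      finally show ?thesis unfolding off using 3 by simp
    qed
  qed
  then show ?thesis unfolding vec_eq_iff vector_add_component by blast
qed

lemma star_hyperplane_subset_span:
  assumes "w \<notin> W"
  shows "{y. star_normal w W \<bullet> y = 0}
    \<subseteq> span ((\<lambda>u. axis u 1) ` (- insert w W) \<union> (\<lambda>a. char_vec {w, a} - char_vec W) ` W)"
    (is "_ \<subseteq> span ?D")
proof
  fix y assume "y \<in> {y. star_normal w W \<bullet> y = 0}"
  then have y: "y = (\<Sum>u\<in>- insert w W. y $ u *\<^sub>R axis u 1)
           + (\<Sum>a\<in>W. (y $ a + y $ w) *\<^sub>R (char_vec {w, a} - char_vec W))"
    using star_hyperplane_decomposition[OF assms] by simp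
  show "y \<in> span ?D"
    by (subst y, intro span_add span_sum span_scale span_base) auto
qed

lemma tree_star_facet:
  fixes E :: "'n::finite \<Rightarrow> 'n \<Rightarrow> bool"
  assumes tree: "is_tree E" and W: "W \<subseteq> neighbors E w"
  shows "{x \<in> co2plex_polytope E. star_lhs w W x = real (card W)} facet_of co2plex_polytope E"
proof -
  let ?P = "co2plex_polytope E" and ?c = "star_normal w W"
  let ?F = "?P \<inter> {x. ?c \<bullet> x = real (card W)}"
  have simple: "simple_graph E" using tree by (simp add: is_tree_def)
  then have "w \<notin> W" using W by (auto simp: neighbors_def simple_graph_def)
  have on_face: "char_vec S \<in> ?F"
    if "co_2_plex E S" "star_lhs w W (char_vec S) = real (card W)" for S
    using that char_vec_in_co2plex_polytope by (simp add: star_lhs_eq_inner)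
  have W_on_face: "char_vec W \<in> ?F"
    using on_face tree_star_leaves_co_2_plex[OF tree W] \<open>w \<notin> W\<close> by (simp add: star_lhs_char_vec)
  have "axis u 1 \<in> (\<lambda>x. x - char_vec W) ` ?F" if "u \<notin> insert w W" for u
  proof -
    have "W \<inter> insert u W = W" by auto
    with that \<open>w \<notin> W\<close> have "char_vec (insert u W) \<in> ?F"
      by (intro on_face tree_star_leaves_insert_co_2_plex[OF tree W]) (auto simp: star_lhs_char_vec)
    moreover have "axis u 1 = char_vec (insert u W) - char_vec W"
      using that by (auto simp: char_vec_def axis_def vec_eq_iff)
    ultimately show ?thesis by blast
  qed
  moreover have "char_vec {w, a} - char_vec W \<in> (\<lambda>x. x - char_vec W) ` ?F" if "a \<in> W" for a
  proof -
    have "card {w, a} \<le> 2" by (simp add: card_insert_le_m1)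
    moreover have "W \<inter> {w, a} = {a}" using that \<open>w \<notin> W\<close> by auto
    ultimately have "char_vec {w, a} \<in> ?F"
      using on_face co_2_plex_card_le_2[OF simple] by (simp add: star_lhs_char_vec)
    then show ?thesis by blast
  qed
  ultimately have "(\<lambda>u. axis u 1) ` (- insert w W) \<union> (\<lambda>a. char_vec {w, a} - char_vec W) ` W
      \<subseteq> (\<lambda>x. x - char_vec W) ` ?F"
    by auto
  then have "{y. ?c \<bullet> y = 0} \<subseteq> span ((\<lambda>x. x - char_vec W) ` ?F)"
    using star_hyperplane_subset_span[OF \<open>w \<notin> W\<close>] span_mono by blast
  then have "?F facet_of ?P"
    using W_on_face star_inequality_valid[OF W]
    by (intro facet_of_supporting_hyperplane convex_convex_hull aff_dim_co2plex_polytope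
          star_normal_nonzero simple \<open>w \<notin> W\<close>)
       (auto simp: co2plex_polytope_def star_lhs_eq_inner)
  moreover have "?F = {x \<in> ?P. star_lhs w W x = real (card W)}"
    by (auto simp: star_lhs_eq_inner)
  ultimately show ?thesis by simp
qed

theorem mainTheorem7:
  fixes E :: "'n::finite \<Rightarrow> 'n \<Rightarrow> bool"
  assumes "simple_graph E" and "connected_graph E"
  shows "(\<forall>w W. W \<subseteq> neighbors E w \<longrightarrow>
            (\<forall>x\<in>co2plex_polytope E. star_lhs w W x \<le> real (card W)))
       \<and> (is_tree E \<longrightarrow>
            (\<forall>w W. W \<subseteq> neighbors E w \<longrightarrow>
              {x\<in>co2plex_polytope E. star_lhs w W x = real (card W)}
                facet_of co2plex_polytope E))"
  using star_inequality_valid tree_star_facet by blast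

end
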